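(* Let $n\ge2$, $N,M\ge1$, let $\Lambda$ be a positive definite diagonal $n\times n$ matrix, let $\overline Q^1_0,\dots,\overline Q^M_0\in SO(n)$, and let $\phi:\mathbb{R}^{n\times n}\to[0,\infty)$ be smooth. Consider the problem of minimizing $$\hat V(U_0,\dots,U_{N-1})=\sum_{k=0}^{N-1}\operatorname{trace}(\Lambda U_k)+\sum_{a=1}^M\phi(Q^a_N)$$ over $U_0,\dots,U_{N-1}\in SO(n)$, where $Q^a_0=\overline Q^a_0$ and $Q^a_{k+1}=Q^a_kU_k$ for $k=0,\dots,N-1$, $a=1,\dots,M$. If $(U_0,\dots,U_{N-1})$ is a (local) minimizer, then there exist real $n\times n$ matrices $P^a_k$ ($a=1,\dots,M$, $k=0,\dots,N$) such that for all $a$ and $k=0,\dots,N-1$: $$Q^a_{k+1}=Q^a_kU_k,\qquad P^a_{k+1}=P^a_kU_k,\qquad U_k\Lambda-\Lambda U_k^T=\sum_{a=1}^M\big((Q^a_k)^TP^a_k-(P^a_k)^TQ^a_k\big),$$ and $P^a_N=\nabla\phi(Q^a_N)$ for all $a$.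
   Context: $SO(n)$ is the group of real orthogonal $n\times n$ matrices of determinant $1$; $A^T$ is the transpose. $\nabla\phi(A)$ is the Euclidean (Frobenius) gradient of $\phi$ at $A\in\mathbb{R}^{n\times n}$, i.e. the matrix with entries $\partial\phi/\partial A_{ij}$, so that $\frac{d}{d\epsilon}\big|_{0}\phi(A+\epsilon B)=\operatorname{trace}(\nabla\phi(A)^TB)$. *)

theory Defs
  imports "HOL-Analysis.Analysis"
begin

fun iter_pderiv :: "'a::euclidean_space list \<Rightarrow> ('a \<Rightarrow> real) \<Rightarrow> 'a \<Rightarrow> real" where
  "iter_pderiv [] f = f"
| "iter_pderiv (v # vs) f = (\<lambda>x. deriv (\<lambda>t. iter_pderiv vs f (x + t *\<^sub>R v)) 0)"

definition smooth_fun :: "('a::euclidean_space \<Rightarrow> real) \<Rightarrow> bool" where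
  "smooth_fun f \<longleftrightarrow> (\<forall>vs \<in> lists Basis. \<forall>x. iter_pderiv vs f differentiable (at x))"

text \<open>Euclidean (Frobenius) gradient: entry (i,j) is the partial derivative
  of phi with respect to the (i,j) entry.\<close>
definition grad_mat :: "(real^'n^'n \<Rightarrow> real) \<Rightarrow> real^'n^'n \<Rightarrow> real^'n^'n" where
  "grad_mat phi A = (\<chi> i j. frechet_derivative phi (at A) (axis i (axis j 1)))"

fun traj :: "(nat \<Rightarrow> real^'n^'n) \<Rightarrow> (nat \<Rightarrow> real^'n^'n) \<Rightarrow> nat \<Rightarrow> nat \<Rightarrow> real^'n^'n" where
  "traj Qbar U a 0 = Qbar a"
| "traj Qbar U a (Suc k) = traj Qbar U a k ** U k"

definition cost :: "nat \<Rightarrow> nat \<Rightarrow> real^'n^'n \<Rightarrow> (nat \<Rightarrow> real^'n^'n) \<Rightarrow> (real^'n^'n \<Rightarrow> real)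
    \<Rightarrow> (nat \<Rightarrow> real^'n^'n) \<Rightarrow> real" where
  "cost N M Lam Qbar phi U =
     (\<Sum>k<N. trace (Lam ** U k)) + (\<Sum>a\<in>{1..M}. phi (traj Qbar U a N))"

end

theory Submission
  imports Defs
begin

text \<open>
  Perturb one control of a minimiser by a rotation in a coordinate plane,
  \<open>U\<^sub>k \<mapsto> G\<^sub>t U\<^sub>k\<close> with \<open>G\<^sub>t\<close> a Givens rotation in the \<open>(i,j)\<close>-plane. This stays in
  \<open>SO(n)\<close>, changes the running cost only in its \<open>k\<close>-th term and the terminal states
  to \<open>Q\<^sup>a\<^sub>k G\<^sub>t U\<^sub>k \<cdots> U\<^bsub>N-1\<^esub>\<close>, so the derivative at \<open>t = 0\<close> must vanish. Writing the
  derivative of \<open>\<phi>\<close> as a trace against its gradient and putting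
  \<open>P\<^sup>a\<^sub>k = \<nabla>\<phi>(Q\<^sup>a\<^sub>N) (U\<^sub>k \<cdots> U\<^bsub>N-1\<^esub>)\<^sup>T\<close>, this derivative is \<open>B\<^sub>i\<^sub>j - B\<^sub>j\<^sub>i\<close> for
  \<open>B = U\<^sub>k \<Lambda> + \<Sigma>\<^sub>a (P\<^sup>a\<^sub>k)\<^sup>T Q\<^sup>a\<^sub>k\<close>. So \<open>B\<close> is symmetric, which for symmetric \<open>\<Lambda>\<close> is the
  stated condition; \<open>P\<^sup>a\<^bsub>k+1\<^esub> = P\<^sup>a\<^sub>k U\<^sub>k\<close> holds because \<open>U\<^sub>k\<close> is orthogonal.
\<close>

lemma sum_UNIV_eq_single:
  "(\<And>r. r \<noteq> b \<Longrightarrow> f r = 0) \<Longrightarrow> (\<Sum>r\<in>(UNIV::'n::finite set). f r) = (f b :: 'a::comm_monoid_add)"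
  by (subst sum.remove[of UNIV b]) (auto intro!: sum.neutral)

lemma bilinear_matrix_matrix_mult:
  "bilinear ((**) :: real^'n^'m \<Rightarrow> real^'p^'n \<Rightarrow> real^'p^'m)"
  by (auto simp: bilinear_def linear_iff vec_eq_iff matrix_matrix_mult_def
      ring_distribs sum.distrib sum_distrib_left mult.assoc mult.left_commute)

interpretation matrix_mult: bounded_bilinear "(**) :: real^'n^'m \<Rightarrow> real^'p^'n \<Rightarrow> real^'p^'m"
  using bilinear_matrix_matrix_mult bilinear_conv_bounded_bilinear by blast

lemma linear_trace: "linear (trace :: real^'n^'n \<Rightarrow> real)"
  by (auto simp: linear_iff trace_def sum.distrib sum_distrib_left)

lemma linear_transpose: "linear (transpose :: real^'n^'m \<Rightarrow> real^'m^'n)"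
  by (simp add: linear_iff transpose_def vec_eq_iff)

lemma has_derivative_trace:
  "(f has_derivative f') F \<Longrightarrow> ((\<lambda>x. trace (f x)) has_derivative (\<lambda>h. trace (f' h))) F"
  for f :: "_ \<Rightarrow> real^'n^'n"
  using bounded_linear.has_derivative linear_conv_bounded_linear linear_trace by blast

lemma has_derivative_sandwich:
  fixes A :: "real^'m^'p" and B :: "real^'q^'n" and f :: "_ \<Rightarrow> real^'n^'m"
  assumes "(f has_derivative f') F"
  shows "((\<lambda>x. A ** f x ** B) has_derivative (\<lambda>h. A ** f' h ** B)) F"
proof -
  have "bounded_linear (\<lambda>M. A ** M ** B)"
    using bounded_linear_compose[OF matrix_mult.bounded_linear_left matrix_mult.bounded_linear_right] .
  then show ?thesis using bounded_linear.has_derivative assms by blast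
qed

lemma rotation_matrix_mult:
  fixes A B :: "real^'n^'n"
  shows "rotation_matrix A \<Longrightarrow> rotation_matrix B \<Longrightarrow> rotation_matrix (A ** B)"
  by (auto simp: rotation_matrix_def det_mul intro: orthogonal_matrix_mul)

lemma transpose_eqI: "(\<And>i j. i \<noteq> j \<Longrightarrow> A $ i $ j = A $ j $ i) \<Longrightarrow> transpose A = A"
  by (metis (no_types, lifting) transpose_def vec_eq_iff vec_lambda_beta)

definition mat_unit :: "'m \<Rightarrow> 'n \<Rightarrow> real^'n^'m" where
  "mat_unit i j = axis i (axis j 1)"

lemma mat_unit_nth: "mat_unit i j $ p $ q = (if p = i \<and> q = j then 1 else 0)"
  by (simp add: mat_unit_def axis_def)

lemma mat_unit_mult: "mat_unit i j ** mat_unit k l = (if j = k then mat_unit i l else 0)"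
proof -
  have "(\<Sum>r\<in>UNIV. mat_unit i j $ p $ r * mat_unit k l $ r $ q) =
      mat_unit i j $ p $ j * mat_unit k l $ j $ q" for p q
    by (rule sum_UNIV_eq_single) (simp add: mat_unit_nth)
  then show ?thesis
    by (auto simp: vec_eq_iff matrix_matrix_mult_def mat_unit_nth)
qed

lemma transpose_mat_unit: "transpose (mat_unit i j) = mat_unit j i"
  by (auto simp: vec_eq_iff transpose_def mat_unit_nth)

lemma trace_mult_mat_unit: "trace (A ** mat_unit i j) = A $ j $ i"
proof -
  have "(\<Sum>r\<in>UNIV. A $ p $ r * mat_unit i j $ r $ p) = A $ p $ i * mat_unit i j $ i $ p" for p
    by (rule sum_UNIV_eq_single) (simp add: mat_unit_nth)
  moreover have "(\<Sum>p\<in>UNIV. A $ p $ i * mat_unit i j $ i $ p) = A $ j $ i"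
    by (subst sum_UNIV_eq_single[of j]) (auto simp: mat_unit_nth)
  ultimately show ?thesis
    by (simp add: trace_def matrix_matrix_mult_def)
qed

lemma mat_unit_expansion: "(\<Sum>i\<in>UNIV. \<Sum>j\<in>UNIV. A $ i $ j *\<^sub>R mat_unit i j) = A"
proof -
  have "(\<Sum>i\<in>UNIV. \<Sum>j\<in>UNIV. A $ i $ j * mat_unit i j $ p $ q) =
      (\<Sum>j\<in>UNIV. A $ p $ j * mat_unit p j $ p $ q)" for p q
    by (rule sum_UNIV_eq_single) (simp add: mat_unit_nth)
  moreover have "(\<Sum>j\<in>UNIV. A $ p $ j * mat_unit p j $ p $ q) = A $ p $ q" for p q
    by (subst sum_UNIV_eq_single[of q]) (auto simp: mat_unit_nth)
  ultimately show ?thesis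
    by (simp add: vec_eq_iff sum_component)
qed

lemma has_derivative_grad_mat:
  assumes "phi differentiable (at A)"
  shows "(phi has_derivative (\<lambda>M. trace (transpose (grad_mat phi A) ** M))) (at A)"
proof -
  let ?L = "frechet_derivative phi (at A)"
  have deriv: "(phi has_derivative ?L) (at A)"
    using assms frechet_derivative_works by blast
  have lin: "linear ?L"
    using deriv has_derivative_linear by blast
  have "?L = (\<lambda>M. trace (transpose (grad_mat phi A) ** M))"
  proof (rule ext)
    fix M
    have "?L M = (\<Sum>i\<in>UNIV. \<Sum>j\<in>UNIV. M $ i $ j * ?L (mat_unit i j))"
      by (subst (1) mat_unit_expansion[of M, symmetric])
        (simp add: linear_sum[OF lin] linear_scale[OF lin])
    also have "\<dots> = trace (transpose (grad_mat phi A) ** M)"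
      by (simp add: trace_def matrix_matrix_mult_def transpose_def grad_mat_def mat_unit_def
          mult.commute) (rule sum.swap)
    finally show "?L M = trace (transpose (grad_mat phi A) ** M)" .
  qed
  with deriv show ?thesis by simp
qed

lemma smooth_fun_differentiable: "smooth_fun f \<Longrightarrow> f differentiable (at x)"
  unfolding smooth_fun_def by (metis iter_pderiv.simps(1) lists.Nil)

definition givens :: "'n \<Rightarrow> 'n \<Rightarrow> real \<Rightarrow> real^'n^'n" where
  "givens i j t = mat 1 + (cos t - 1) *\<^sub>R (mat_unit i i + mat_unit j j)
     + sin t *\<^sub>R (mat_unit j i - mat_unit i j)"

lemma givens_0 [simp]: "givens i j 0 = mat 1"
  by (simp add: givens_def)

lemma has_derivative_givens:
  "(givens i j has_derivative (\<lambda>h. h *\<^sub>R (mat_unit j i - mat_unit i j))) (at 0)"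
  unfolding givens_def by (auto intro!: derivative_eq_intros)

lemma givens_add:
  assumes "i \<noteq> j"
  shows "givens i j (s + t) = givens i j s ** givens i j t"
proof -
  define D where "D = mat_unit i i + mat_unit j j"
  define X where "X = mat_unit j i - mat_unit i j"
  have rel: "D ** D = D" "D ** X = X" "X ** D = X" "X ** X = - D"
    using assms by (simp_all add: D_def X_def matrix_add_ldistrib matrix_mult.add_left
        matrix_mult.diff_left matrix_mult.diff_right mat_unit_mult)
  \<comment> \<open>On the \<open>(i,j)\<close>-plane \<open>D\<close> acts as the identity and \<open>X\<close> as a quarter turn, so
    \<open>mat 1 + a *\<^sub>R D + b *\<^sub>R X\<close> multiplies like the complex number \<open>(1 + a) + b\<i>\<close>.\<close>
  have prod: "(mat 1 + a *\<^sub>R D + b *\<^sub>R X) ** (mat 1 + c *\<^sub>R D + d *\<^sub>R X)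
      = mat 1 + (a + c + a * c - b * d) *\<^sub>R D + (b + d + a * d + c * b) *\<^sub>R X" for a b c d
    by (simp add: matrix_add_ldistrib matrix_mult.add_left matrix_mult.scaleR_left
        matrix_mult.scaleR_right rel algebra_simps)
  have "cos s - 1 + (cos t - 1) + (cos s - 1) * (cos t - 1) - sin s * sin t = cos (s + t) - 1"
       "sin s + sin t + (cos s - 1) * sin t + (cos t - 1) * sin s = sin (s + t)"
    by (simp_all add: cos_add sin_add algebra_simps)
  then show ?thesis
    unfolding givens_def D_def[symmetric] X_def[symmetric] prod by simp
qed

lemma transpose_givens: "transpose (givens i j t) = givens i j (- t)"
  by (simp add: givens_def linear_add[OF linear_transpose] linear_diff[OF linear_transpose]
      transpose_scalar transpose_mat_unit algebra_simps)

lemma orthogonal_matrix_givens: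
  assumes "i \<noteq> j"
  shows "orthogonal_matrix (givens i j t)"
  using givens_add[OF assms, of "- t" t]
  by (simp add: orthogonal_matrix transpose_givens)

lemma rotation_matrix_givens:
  assumes "i \<noteq> j"
  shows "rotation_matrix (givens i j t)"
proof -
  have "det (givens i j t) = det (givens i j (t / 2)) ^ 2"
    using givens_add[OF assms, of "t / 2" "t / 2"] by (simp add: det_mul power2_eq_square)
  moreover have "det (givens i j (t / 2)) = 1 \<or> det (givens i j (t / 2)) = - 1"
    by (rule det_orthogonal_matrix[OF orthogonal_matrix_givens[OF assms]])
  ultimately have "det (givens i j t) = 1"
    by auto
  then show ?thesis
    using orthogonal_matrix_givens[OF assms] rotation_matrix_def by blast
qed

fun mat_prod_from :: "(nat \<Rightarrow> real^'n^'n) \<Rightarrow> nat \<Rightarrow> nat \<Rightarrow> real^'n^'n" where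
  "mat_prod_from U k 0 = mat 1"
| "mat_prod_from U k (Suc m) = U k ** mat_prod_from U (Suc k) m"

lemma mat_prod_from_cong:
  "(\<And>l. k \<le> l \<Longrightarrow> V l = U l) \<Longrightarrow> mat_prod_from V k m = mat_prod_from U k m"
  by (induction m arbitrary: k) auto

lemma traj_cong: "(\<And>l. l < k \<Longrightarrow> V l = U l) \<Longrightarrow> traj Qbar V a k = traj Qbar U a k"
  by (induction k) auto

lemma traj_add: "traj Qbar U a (k + m) = traj Qbar U a k ** mat_prod_from U k m"
proof (induction m arbitrary: k)
  case 0
  then show ?case by simp
next
  case (Suc m)
  have "traj Qbar U a (k + Suc m) = traj Qbar U a (Suc k) ** mat_prod_from U (Suc k) m"
    using Suc.IH[of "Suc k"] by simp
  then show ?case by (simp add: matrix_mul_assoc)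
qed

lemma traj_fun_upd:
  assumes "k < N"
  shows "traj Qbar (U(k := W)) a N = traj Qbar U a k ** W ** mat_prod_from U (Suc k) (N - Suc k)"
proof -
  have "N = k + Suc (N - Suc k)" using assms by simp
  then have "traj Qbar (U(k := W)) a N =
      traj Qbar (U(k := W)) a k ** mat_prod_from (U(k := W)) k (Suc (N - Suc k))"
    by (metis traj_add)
  also have "\<dots> = traj Qbar U a k ** (W ** mat_prod_from U (Suc k) (N - Suc k))"
    using traj_cong[of k "U(k := W)" U] mat_prod_from_cong[of "Suc k" "U(k := W)" U] by simp
  finally show ?thesis by (simp add: matrix_mul_assoc)
qed

lemma cost_fun_upd:
  assumes "k < N"
  shows "cost N M Lam Qbar phi (U(k := W)) =
    (\<Sum>l<N. trace (Lam ** U l)) - trace (Lam ** U k) + trace (Lam ** W)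
    + (\<Sum>a\<in>{1..M}. phi (traj Qbar U a k ** W ** mat_prod_from U (Suc k) (N - Suc k)))"
proof -
  have "(\<Sum>l<N. trace (Lam ** (U(k := W)) l)) =
      (\<Sum>l<N. trace (Lam ** U l)) - trace (Lam ** U k) + trace (Lam ** W)"
    using assms by (simp add: sum.remove[of "{..<N}" k])
  then show ?thesis by (simp add: cost_def traj_fun_upd[OF assms])
qed

definition costate :: "(real^'n^'n \<Rightarrow> real) \<Rightarrow> (nat \<Rightarrow> real^'n^'n) \<Rightarrow> (nat \<Rightarrow> real^'n^'n)
    \<Rightarrow> nat \<Rightarrow> nat \<Rightarrow> nat \<Rightarrow> real^'n^'n" where
  "costate phi Qbar U N a k = grad_mat phi (traj Qbar U a N) ** transpose (mat_prod_from U k (N - k))"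

lemma costate_final: "costate phi Qbar U N a N = grad_mat phi (traj Qbar U a N)"
  by (simp add: costate_def)

lemma costate_Suc:
  assumes "k < N" and "orthogonal_matrix (U k)"
  shows "costate phi Qbar U N a (Suc k) = costate phi Qbar U N a k ** U k"
proof -
  have "N - k = Suc (N - Suc k)" using assms(1) by simp
  moreover have "transpose (U k) ** U k = mat 1"
    using assms(2) by (simp add: orthogonal_matrix_def)
  ultimately show ?thesis
    by (simp add: costate_def matrix_transpose_mul flip: matrix_mul_assoc)
qed

lemma local_min_on_rotations_deriv_zero:
  fixes J :: "(nat \<Rightarrow> real^'n^'n) \<Rightarrow> real" and c :: "real \<Rightarrow> real^'n^'n"
  assumes locmin: "\<exists>e>0. \<forall>V. (\<forall>l<N. rotation_matrix (V l) \<and> norm (V l - U l) < e) \<longrightarrow> J U \<le> J V"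
    and U_SO: "\<forall>l<N. rotation_matrix (U l)" and "k < N"
    and c_SO: "\<And>t. rotation_matrix (c t)" and c0: "c 0 = U k" and "continuous (at 0) c"
    and deriv: "((\<lambda>t. J (U(k := c t))) has_real_derivative D) (at 0)"
  shows "D = 0"
proof -
  obtain e where "e > 0"
    and min: "\<And>V. (\<forall>l<N. rotation_matrix (V l) \<and> norm (V l - U l) < e) \<Longrightarrow> J U \<le> J V"
    using locmin by blast
  obtain d where "d > 0" and d: "\<And>t. \<bar>t\<bar> < d \<Longrightarrow> norm (c t - U k) < e"
    using \<open>continuous (at 0) c\<close> \<open>e > 0\<close> c0
    by (auto simp: continuous_at_eps_delta dist_norm)
  have "J (U(k := c 0)) \<le> J (U(k := c t))" if "\<bar>0 - t\<bar> < d" for t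
  proof -
    have "J U \<le> J (U(k := c t))"
      using that U_SO c_SO d \<open>e > 0\<close> by (intro min) auto
    then show ?thesis using c0 by simp
  qed
  then show "D = 0"
    using DERIV_local_min[OF deriv \<open>d > 0\<close>] by blast
qed

lemma cost_givens_has_real_derivative:
  assumes "k < N" and diff: "\<And>a. phi differentiable (at (traj Qbar U a N))"
  shows "((\<lambda>t. cost N M Lam Qbar phi (U(k := givens i j t ** U k))) has_real_derivative
     trace ((U k ** Lam + (\<Sum>a\<in>{1..M}. transpose (costate phi Qbar U N a k) ** traj Qbar U a k))
       ** (mat_unit j i - mat_unit i j))) (at 0)"
proof -
  define X where "X = mat_unit j i - mat_unit i j"
  define R where "R = mat_prod_from U k (N - k)"
  let ?Q = "\<lambda>a. traj Qbar U a k"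
  let ?G = "\<lambda>a. grad_mat phi (traj Qbar U a N)"
  have R_eq: "U k ** mat_prod_from U (Suc k) (N - Suc k) = R"
    using assms(1) by (simp add: R_def Suc_diff_Suc[symmetric])
  have traj_N: "?Q a ** R = traj Qbar U a N" for a
    using traj_add[of Qbar U a k "N - k"] assms(1) by (simp add: R_def)
  have cost_eq: "cost N M Lam Qbar phi (U(k := givens i j t ** U k)) =
      (\<Sum>l<N. trace (Lam ** U l)) - trace (Lam ** U k) + trace (Lam ** givens i j t ** U k)
      + (\<Sum>a\<in>{1..M}. phi (?Q a ** givens i j t ** R))" for t
    unfolding cost_fun_upd[OF assms(1)] by (simp add: R_eq flip: matrix_mul_assoc)
  have phi_deriv: "((\<lambda>t. phi (?Q a ** givens i j t ** R)) has_derivative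
      (\<lambda>h. trace (transpose (?G a) ** (?Q a ** (h *\<^sub>R X) ** R)))) (at 0)" for a
  proof -
    have "phi differentiable (at (?Q a ** givens i j 0 ** R))"
      using diff by (simp add: traj_N)
    from has_derivative_compose[OF has_derivative_sandwich[OF has_derivative_givens]
        has_derivative_grad_mat[OF this]]
    show ?thesis by (simp add: X_def traj_N)
  qed
  have "((\<lambda>t. cost N M Lam Qbar phi (U(k := givens i j t ** U k))) has_derivative
      (\<lambda>h. trace (Lam ** (h *\<^sub>R X) ** U k)
        + (\<Sum>a\<in>{1..M}. trace (transpose (?G a) ** (?Q a ** (h *\<^sub>R X) ** R))))) (at 0)"
    unfolding cost_eq X_def
    by (rule has_derivative_eq_rhs, (rule derivative_intros has_derivative_trace
        has_derivative_sandwich has_derivative_givens phi_deriv[unfolded X_def])+) simp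
  moreover have "trace (Lam ** (h *\<^sub>R X) ** U k)
      + (\<Sum>a\<in>{1..M}. trace (transpose (?G a) ** (?Q a ** (h *\<^sub>R X) ** R)))
      = trace ((U k ** Lam + (\<Sum>a\<in>{1..M}. transpose (costate phi Qbar U N a k) ** ?Q a)) ** X) * h" for h
  proof -
    have "transpose (costate phi Qbar U N a k) = R ** transpose (?G a)" for a
      by (simp add: costate_def R_def matrix_transpose_mul)
    moreover have "trace (Lam ** X ** U k) = trace (U k ** Lam ** X)"
      by (metis matrix_mul_assoc trace_mul_sym)
    moreover have "trace (transpose (?G a) ** (?Q a ** X ** R)) =
        trace (R ** transpose (?G a) ** ?Q a ** X)" for a
      by (metis matrix_mul_assoc trace_mul_sym)
    ultimately show ?thesis
      by (simp add: matrix_mult.scaleR_left matrix_mult.scaleR_right linear_scale[OF linear_trace]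
          matrix_mult.add_left matrix_mult.sum_left trace_add linear_sum[OF linear_trace]
          sum_distrib_left sum_distrib_right algebra_simps)
  qed
  ultimately show ?thesis
    by (simp add: has_field_derivative_def X_def)
qed

lemma local_min_costate_symmetric:
  fixes U :: "nat \<Rightarrow> real^'n^'n"
  assumes locmin: "\<exists>e>0. \<forall>V. (\<forall>l<N. rotation_matrix (V l) \<and> norm (V l - U l) < e)
                   \<longrightarrow> cost N M Lam Qbar phi U \<le> cost N M Lam Qbar phi V"
    and U_SO: "\<forall>l<N. rotation_matrix (U l)" and "k < N"
    and diff: "\<And>A. phi differentiable (at A)"
  defines "B \<equiv> U k ** Lam + (\<Sum>a\<in>{1..M}. transpose (costate phi Qbar U N a k) ** traj Qbar U a k)"
  shows "transpose B = B"
proof (rule transpose_eqI)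
  fix i j :: 'n
  assume "i \<noteq> j"
  have "continuous (at 0) (\<lambda>t. givens i j t ** U k)"
    using has_derivative_continuous[OF has_derivative_sandwich[OF has_derivative_givens, of "mat 1"]]
    by simp
  moreover have "rotation_matrix (givens i j t ** U k)" for t
    using rotation_matrix_givens[OF \<open>i \<noteq> j\<close>] U_SO \<open>k < N\<close> by (simp add: rotation_matrix_mult)
  ultimately have "trace (B ** (mat_unit j i - mat_unit i j)) = 0"
    unfolding B_def
    by (intro local_min_on_rotations_deriv_zero[OF locmin U_SO \<open>k < N\<close>,
        where c = "\<lambda>t. givens i j t ** U k"] cost_givens_has_real_derivative[OF \<open>k < N\<close> diff])
      simp_all
  then show "B $ i $ j = B $ j $ i"
    by (simp add: matrix_mult.diff_right trace_sub trace_mult_mat_unit)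
qed

theorem theorem2p6:
  fixes N M :: nat
    and Lam :: "real^'n^'n"
    and Qbar U :: "nat \<Rightarrow> real^'n^'n"
    and phi :: "real^'n^'n \<Rightarrow> real"
  assumes n2: "CARD('n) \<ge> 2"
    and N1: "N \<ge> 1" and M1: "M \<ge> 1"
    and Lam_diag: "\<forall>i j. i \<noteq> j \<longrightarrow> Lam $ i $ j = 0"
    and Lam_pos: "\<forall>i. Lam $ i $ i > 0"
    and Qbar_SO: "\<forall>a\<in>{1..M}. rotation_matrix (Qbar a)"
    and phi_nonneg: "\<forall>A. phi A \<ge> 0"
    and phi_smooth: "smooth_fun phi"
    and U_SO: "\<forall>k<N. rotation_matrix (U k)"
    and locmin: "\<exists>e>0. \<forall>V. (\<forall>k<N. rotation_matrix (V k) \<and> norm (V k - U k) < e)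
                   \<longrightarrow> cost N M Lam Qbar phi U \<le> cost N M Lam Qbar phi V"
  shows "\<exists>P :: nat \<Rightarrow> nat \<Rightarrow> real^'n^'n.
     (\<forall>a\<in>{1..M}. \<forall>k<N.
        traj Qbar U a (Suc k) = traj Qbar U a k ** U k
      \<and> P a (Suc k) = P a k ** U k
      \<and> U k ** Lam - Lam ** transpose (U k) =
          (\<Sum>b\<in>{1..M}. transpose (traj Qbar U b k) ** P b k - transpose (P b k) ** traj Qbar U b k))
   \<and> (\<forall>a\<in>{1..M}. P a N = grad_mat phi (traj Qbar U a N))"
proof -
  let ?Q = "traj Qbar U" and ?P = "costate phi Qbar U N"
  have diff: "\<And>A. phi differentiable (at A)"
    using phi_smooth by (rule smooth_fun_differentiable)
  have Lam_sym: "transpose Lam = Lam"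
    using Lam_diag by (intro transpose_eqI) simp
  have "U k ** Lam - Lam ** transpose (U k) =
      (\<Sum>b\<in>{1..M}. transpose (?Q b k) ** ?P b k - transpose (?P b k) ** ?Q b k)" if "k < N" for k
  proof -
    let ?S = "\<Sum>b\<in>{1..M}. transpose (?P b k) ** ?Q b k"
    have "transpose (U k ** Lam + ?S) = U k ** Lam + ?S"
      by (rule local_min_costate_symmetric[OF locmin U_SO that diff])
    moreover have "transpose (U k ** Lam + ?S) =
        Lam ** transpose (U k) + (\<Sum>b\<in>{1..M}. transpose (?Q b k) ** ?P b k)"
      by (simp add: linear_add[OF linear_transpose] linear_sum[OF linear_transpose]
          matrix_transpose_mul Lam_sym)
    ultimately show ?thesis
      by (simp add: sum_subtractf algebra_simps)
  qed
  moreover have "?P a (Suc k) = ?P a k ** U k" if "k < N" for a k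
    using U_SO that by (intro costate_Suc) (simp_all add: rotation_matrix_def)
  ultimately show ?thesis
    by (intro exI[of _ ?P]) (simp add: costate_final)
qed

end
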